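(* Let $Q\in\mathcal{Q}(n,d,m)$ and $\underline{\delta}\in\Omega_3(Q)$. Then $|\underline{\delta}|\leq m(d-n+1)$.
   Context: A quiver $Q$ is a finite oriented graph; for an arrow $a$, $a''$ is its tail and $a'$ its head. A path $a=a_1\cdots a_s$ ($a_i$ arrows) satisfies $a_i'=a_{i+1}''$; it is closed if $a_1''=a_s'$; $V(a)=\{a_1'',a_1',\dots,a_s'\}$, $A(a)=\{a_1,\dots,a_s\}$. A closed path is primitive if each vertex of $V(a)$ is the head of exactly one $a_i$. $m(Q)$ is the maximal degree of a primitive closed path; $Q$ is strongly connected if some closed path contains all vertices; $\mathcal{Q}(n,d,m)$ is the set of strongly connected quivers with $n$ vertices, $d$ arrows and $m(Q)=m$. The multidegree $\mathrm{mdeg}(a)\in\mathbb{N}^{\#A(Q)}$ of a path $a$ has $b$-component equal to the number of $i$ with $a_i=b$. For $\underline{\delta}\in\mathbb{N}^{\#A(Q)}$, $|\underline{\delta}|=\sum_b\delta_b$. $\Omega_0(Q)$ is the set of $\mathrm{mdeg}(h)$ for closed paths $h$ in $Q$ with $A(h)=A(Q)$. A path $a$ is $\underline{\delta}$-double if it is a primitive closed path and $\delta_{a_i}\geq2$ for all $i$. $\Omega_3(Q)$ is the set of $\underline{\delta}\in\Omega_0(Q)$ such that there is no $\underline{\delta}$-double path in $Q$. *)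

theory Defs
  imports Main
begin

text \<open>A quiver is given by a vertex set V, an arrow set A, and tail/head maps
  (tl_of a = a'', hd_of a = a'). Multiple arrows and loops are allowed.\<close>

definition quiver :: "'v set \<Rightarrow> 'a set \<Rightarrow> ('a \<Rightarrow> 'v) \<Rightarrow> ('a \<Rightarrow> 'v) \<Rightarrow> bool" where
  "quiver V A tl_of hd_of \<longleftrightarrow> finite V \<and> finite A \<and>
     (\<forall>a\<in>A. tl_of a \<in> V \<and> hd_of a \<in> V)"

definition is_path :: "'a set \<Rightarrow> ('a \<Rightarrow> 'v) \<Rightarrow> ('a \<Rightarrow> 'v) \<Rightarrow> 'a list \<Rightarrow> bool" where
  "is_path A tl_of hd_of p \<longleftrightarrow> p \<noteq> [] \<and> set p \<subseteq> A \<and>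
     (\<forall>i. Suc i < length p \<longrightarrow> hd_of (p ! i) = tl_of (p ! Suc i))"

definition closed_path :: "'a set \<Rightarrow> ('a \<Rightarrow> 'v) \<Rightarrow> ('a \<Rightarrow> 'v) \<Rightarrow> 'a list \<Rightarrow> bool" where
  "closed_path A tl_of hd_of p \<longleftrightarrow> is_path A tl_of hd_of p \<and> tl_of (hd p) = hd_of (last p)"

definition path_verts :: "('a \<Rightarrow> 'v) \<Rightarrow> ('a \<Rightarrow> 'v) \<Rightarrow> 'a list \<Rightarrow> 'v set" where
  "path_verts tl_of hd_of p = insert (tl_of (hd p)) (hd_of ` set p)"

definition primitive_closed :: "'a set \<Rightarrow> ('a \<Rightarrow> 'v) \<Rightarrow> ('a \<Rightarrow> 'v) \<Rightarrow> 'a list \<Rightarrow> bool" where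
  "primitive_closed A tl_of hd_of p \<longleftrightarrow> closed_path A tl_of hd_of p \<and>
     (\<forall>v\<in>path_verts tl_of hd_of p. card {i. i < length p \<and> hd_of (p ! i) = v} = 1)"

definition mQ :: "'a set \<Rightarrow> ('a \<Rightarrow> 'v) \<Rightarrow> ('a \<Rightarrow> 'v) \<Rightarrow> nat" where
  "mQ A tl_of hd_of = Max {length p | p. primitive_closed A tl_of hd_of p}"

definition strongly_connected :: "'v set \<Rightarrow> 'a set \<Rightarrow> ('a \<Rightarrow> 'v) \<Rightarrow> ('a \<Rightarrow> 'v) \<Rightarrow> bool" where
  "strongly_connected V A tl_of hd_of \<longleftrightarrow>
     (\<exists>p. closed_path A tl_of hd_of p \<and> V \<subseteq> path_verts tl_of hd_of p)"

definition in_Qndm :: "'v set \<Rightarrow> 'a set \<Rightarrow> ('a \<Rightarrow> 'v) \<Rightarrow> ('a \<Rightarrow> 'v) \<Rightarrow> nat \<Rightarrow> nat \<Rightarrow> nat \<Rightarrow> bool" where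
  "in_Qndm V A tl_of hd_of n d m \<longleftrightarrow> quiver V A tl_of hd_of \<and> strongly_connected V A tl_of hd_of \<and>
     card V = n \<and> card A = d \<and> mQ A tl_of hd_of = m"

definition mdeg :: "'a list \<Rightarrow> 'a \<Rightarrow> nat" where
  "mdeg p = (\<lambda>b. count_list p b)"

definition Omega0 :: "'a set \<Rightarrow> ('a \<Rightarrow> 'v) \<Rightarrow> ('a \<Rightarrow> 'v) \<Rightarrow> ('a \<Rightarrow> nat) set" where
  "Omega0 A tl_of hd_of = {mdeg h | h. closed_path A tl_of hd_of h \<and> set h = A}"

definition delta_double :: "'a set \<Rightarrow> ('a \<Rightarrow> 'v) \<Rightarrow> ('a \<Rightarrow> 'v) \<Rightarrow> ('a \<Rightarrow> nat) \<Rightarrow> 'a list \<Rightarrow> bool" where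
  "delta_double A tl_of hd_of \<delta> p \<longleftrightarrow> primitive_closed A tl_of hd_of p \<and> (\<forall>i<length p. \<delta> (p ! i) \<ge> 2)"

definition Omega3 :: "'a set \<Rightarrow> ('a \<Rightarrow> 'v) \<Rightarrow> ('a \<Rightarrow> 'v) \<Rightarrow> ('a \<Rightarrow> nat) set" where
  "Omega3 A tl_of hd_of = {\<delta> \<in> Omega0 A tl_of hd_of. \<not> (\<exists>p. delta_double A tl_of hd_of \<delta> p)}"

definition delta_abs :: "'a set \<Rightarrow> ('a \<Rightarrow> nat) \<Rightarrow> nat" where
  "delta_abs A \<delta> = (\<Sum>b\<in>A. \<delta> b)"

end

theory Submission
  imports Defs
begin

text \<open>
  Let h be a closed path through all arrows with multidegree \<delta>, so that |\<delta>| is the length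
  of h. By induction on the length, length h \<le> m (#A(h) - #V(h) + 1). If h is not
  primitive, a shortest segment of h between two arrows with the same head is a primitive
  closed path c, and cutting it out leaves a closed path h'. As c is not \<delta>-double, one of its
  arrows occurs only once in h, hence not in h'; the last arrow of c outside h' has its head on
  h', so adding c to h' adds fewer vertices than arrows, while length c \<le> m. Strong
  connectivity gives V(h) = V.
\<close>

lemma distinct_iff_count_list_eq_1: "distinct xs \<longleftrightarrow> (\<forall>x\<in>set xs. count_list xs x = 1)"
  by (induction xs) (auto simp: count_list_0_iff)

lemma count_list_map_conv_card:
  "count_list (map f xs) y = card {i. i < length xs \<and> f (xs ! i) = y}"
  by (auto simp: count_list_eq_length_filter length_filter_conv_card intro!: arg_cong[where f = card])

lemma not_distinct_map_split:
  assumes "\<not> distinct (map f xs)"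
  obtains ys zs us where "xs = ys @ zs @ us" "ys \<noteq> []" "zs \<noteq> []" "f (last ys) = f (last zs)"
proof -
  obtain ys' zs' us' a where "map f xs = ys' @ [a] @ zs' @ [a] @ us'"
    using not_distinct_decomp[OF assms] by blast
  then have "map f xs = (ys' @ [a]) @ (zs' @ [a]) @ us'" by simp
  from map_eq_append_conv[THEN iffD1, OF this] obtain ys rest
    where ys: "xs = ys @ rest" "ys' @ [a] = map f ys" "(zs' @ [a]) @ us' = map f rest" by blast
  from map_eq_append_conv[THEN iffD1, OF ys(3)[symmetric]] obtain zs us
    where zs: "rest = zs @ us" "zs' @ [a] = map f zs" by blast
  have last_map_snoc: "ws \<noteq> [] \<and> f (last ws) = a" if "ws' @ [a] = map f ws" for ws ws'
    using that by (metis Nil_is_map_conv last_map last_snoc snoc_eq_iff_butlast)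
  show ?thesis
    using that ys(1) zs(1) last_map_snoc[OF ys(2)] last_map_snoc[OF zs(2)] by simp
qed

lemma closed_path_iff_successively:
  "closed_path A T H p \<longleftrightarrow>
     p \<noteq> [] \<and> set p \<subseteq> A \<and> successively (\<lambda>a b. H a = T b) p \<and> T (hd p) = H (last p)"
  unfolding closed_path_def is_path_def successively_conv_nth by auto

lemma closed_path_tails_subset_heads:
  assumes "closed_path A T H p"
  shows "T ` set p \<subseteq> H ` set p"
proof
  fix v assume "v \<in> T ` set p"
  then obtain k where k: "k < length p" "v = T (p ! k)" by (auto simp: in_set_conv_nth)
  show "v \<in> H ` set p"
  proof (cases k)
    case 0
    with assms k have "v = H (last p)"
      by (auto simp: closed_path_def is_path_def hd_conv_nth)
    with k show ?thesis by (metis image_eqI last_in_set list.size(3) not_less0)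
  next
    case (Suc k')
    with assms k have "v = H (p ! k')"
      by (auto simp: closed_path_def is_path_def)
    with k Suc show ?thesis by (metis Suc_lessD image_eqI nth_mem)
  qed
qed

lemma path_verts_closed_path:
  assumes "closed_path A T H p"
  shows "path_verts T H p = H ` set p"
proof -
  have "hd p \<in> set p" using assms by (auto simp: closed_path_def is_path_def)
  then show ?thesis
    using closed_path_tails_subset_heads[OF assms] unfolding path_verts_def by auto
qed

lemma primitive_closed_iff_distinct_heads:
  "primitive_closed A T H p \<longleftrightarrow> closed_path A T H p \<and> distinct (map H p)"
  unfolding primitive_closed_def distinct_iff_count_list_eq_1 count_list_map_conv_card
  by (auto simp: path_verts_closed_path)

lemma primitive_closed_length_le_card:
  assumes "quiver V A T H" and "primitive_closed A T H p"
  shows "length p \<le> card V"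
proof -
  have "distinct (map H p)" and "set p \<subseteq> A"
    using assms(2) by (auto simp: primitive_closed_iff_distinct_heads closed_path_def is_path_def)
  have "length p = card (H ` set p)"
    using \<open>distinct (map H p)\<close> by (metis distinct_card length_map set_map)
  moreover have "H ` set p \<subseteq> V"
    using \<open>set p \<subseteq> A\<close> assms(1) by (auto simp: quiver_def)
  ultimately show ?thesis
    using assms(1) by (simp add: card_mono quiver_def)
qed

lemma primitive_closed_length_le_mQ:
  assumes "quiver V A T H" and "primitive_closed A T H p"
  shows "length p \<le> mQ A T H"
proof -
  have "{length p | p. primitive_closed A T H p} \<subseteq> {..card V}"
    using primitive_closed_length_le_card[OF assms(1)] by auto
  then have "finite {length p | p. primitive_closed A T H p}"
    by (rule finite_subset) simp
  then show ?thesis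
    unfolding mQ_def using assms(2) by (intro Max_ge) auto
qed

lemma closed_path_split_cycle:
  assumes "closed_path A T H (xs @ c @ ys)" and "xs \<noteq> []" and "c \<noteq> []"
    and "H (last xs) = H (last c)"
  shows "closed_path A T H c" and "closed_path A T H (xs @ ys)"
proof -
  let ?R = "\<lambda>a b. H a = T b"
  have succ: "successively ?R xs" "successively ?R c" "successively ?R ys"
    and xs_c: "H (last xs) = T (hd c)" and c_ys: "ys \<noteq> [] \<Longrightarrow> H (last c) = T (hd ys)"
    and arrows: "set (xs @ c @ ys) \<subseteq> A"
    and closing: "T (hd xs) = H (last (xs @ c @ ys))"
    using assms(1-3) by (auto simp: closed_path_iff_successively successively_append_iff)
  show "closed_path A T H c"
    using succ(2) xs_c assms(3,4) arrows by (auto simp: closed_path_iff_successively)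
  show "closed_path A T H (xs @ ys)"
    using succ(1,3) c_ys closing assms(2-4) arrows
    by (cases "ys = []") (auto simp: closed_path_iff_successively successively_append_iff)
qed

lemma closed_path_split_primitive:
  assumes "closed_path A T H h" and "\<not> primitive_closed A T H h"
  obtains xs c ys where "h = xs @ c @ ys" and "primitive_closed A T H c"
    and "closed_path A T H (xs @ ys)" and "H (last c) \<in> H ` set (xs @ ys)"
proof -
  define splits where "splits = {(xs, c, ys). h = xs @ c @ ys \<and> xs \<noteq> [] \<and> c \<noteq> [] \<and>
    H (last xs) = H (last c)}"
  have "\<not> distinct (map H h)"
    using assms by (simp add: primitive_closed_iff_distinct_heads)
  then obtain s where "s \<in> splits"
    by (elim not_distinct_map_split) (auto simp: splits_def)
  then obtain xs c ys where split: "(xs, c, ys) \<in> splits"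
    and shortest: "\<And>xs' c' ys'. (xs', c', ys') \<in> splits \<Longrightarrow> length c \<le> length c'"
    using ex_has_least_nat[of "\<lambda>s. s \<in> splits" s "\<lambda>(_, c, _). length c"] by fastforce
  then have h: "h = xs @ c @ ys" and ne: "xs \<noteq> []" "c \<noteq> []" and eq: "H (last xs) = H (last c)"
    by (auto simp: splits_def)
  have "distinct (map H c)"
  proof (rule ccontr)
    assume "\<not> distinct (map H c)"
    then obtain c1 c2 c3 where "c = c1 @ c2 @ c3" "c1 \<noteq> []" "c2 \<noteq> []" "H (last c1) = H (last c2)"
      by (rule not_distinct_map_split)
    then have "(xs @ c1, c2, c3 @ ys) \<in> splits" and "length c2 < length c"
      using h by (auto simp: splits_def)
    then show False using shortest by fastforce
  qed
  moreover have "closed_path A T H c" and "closed_path A T H (xs @ ys)"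
    using closed_path_split_cycle[OF assms(1)[unfolded h] ne eq] by auto
  moreover have "H (last c) \<in> H ` set (xs @ ys)"
    using ne eq by (metis image_eqI last_in_set Un_iff set_append)
  ultimately show ?thesis
    using h that by (simp add: primitive_closed_iff_distinct_heads)
qed

lemma exists_arrow_not_in_with_head_in:
  assumes "successively (\<lambda>a b. H a = T b) c" and "T ` S \<subseteq> H ` S"
    and "H (last c) \<in> H ` S" and "\<not> set c \<subseteq> S"
  shows "\<exists>f \<in> set c - S. H f \<in> H ` S"
  using assms
proof (induction c)
  case Nil
  then show ?case by simp
next
  case (Cons a c)
  show ?case
  proof (cases "c = []")
    case True
    with Cons.prems show ?thesis by auto
  next
    case False
    with Cons.prems(1) have "H a = T (hd c)" and "successively (\<lambda>a b. H a = T b) c"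
      by (auto simp: successively_Cons)
    show ?thesis
    proof (cases "set c \<subseteq> S")
      case True
      with Cons.prems(4) have "a \<notin> S" by simp
      moreover have "H a \<in> H ` S"
        using True Cons.prems(2) hd_in_set[OF \<open>c \<noteq> []\<close>] \<open>H a = T (hd c)\<close> by blast
      ultimately show ?thesis by auto
    next
      case False
      with Cons.IH \<open>successively _ c\<close> \<open>c \<noteq> []\<close> Cons.prems(2,3) show ?thesis by auto
    qed
  qed
qed

lemma card_image_Un_less:
  assumes "finite C" and "f \<in> C - S" and "g f \<in> g ` S"
  shows "card (g ` (C \<union> S)) < card (g ` S) + card (C - S)"
proof -
  have "g ` (C \<union> S) = g ` S \<union> g ` (C - S - {f})"
    using assms(3) by blast
  then have "card (g ` (C \<union> S)) \<le> card (g ` S) + card (g ` (C - S - {f}))"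
    by (simp add: card_Un_le)
  also have "card (g ` (C - S - {f})) \<le> card (C - S - {f})"
    using assms(1) by (simp add: card_image_le)
  also have "card (C - S - {f}) < card (C - S)"
    using assms(1,2) by (intro card_Diff1_less) auto
  finally show ?thesis by simp
qed

lemma card_heads_add_path_less:
  assumes "closed_path A T H h" and "successively (\<lambda>a b. H a = T b) c"
    and "H (last c) \<in> H ` set h" and "\<not> set c \<subseteq> set h"
  shows "card (H ` (set c \<union> set h)) + card (set h) < card (H ` set h) + card (set c \<union> set h)"
proof -
  obtain f where "f \<in> set c - set h" and "H f \<in> H ` set h"
    using exists_arrow_not_in_with_head_in[OF assms(2) closed_path_tails_subset_heads[OF assms(1)]]
      assms(3,4) by blast
  then have "card (H ` (set c \<union> set h)) < card (H ` set h) + card (set c - set h)"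
    by (intro card_image_Un_less) auto
  moreover have "card (set c \<union> set h) = card (set h) + card (set c - set h)"
    by (simp add: card_Un_disjoint[symmetric] Un_commute)
  ultimately show ?thesis by simp
qed

lemma closed_path_length_bound:
  assumes "quiver V A T H" and "closed_path A T H h"
    and "\<nexists>p. delta_double A T H (mdeg h) p"
  shows "length h + mQ A T H * card (H ` set h) \<le> mQ A T H * (card (set h) + 1)"
  using assms(2,3)
proof (induction "length h" arbitrary: h rule: less_induct)
  case less
  let ?m = "mQ A T H"
  show ?case
  proof (cases "primitive_closed A T H h")
    case True
    then have "length h \<le> ?m"
      by (rule primitive_closed_length_le_mQ[OF assms(1)])
    moreover have "?m * card (H ` set h) \<le> ?m * card (set h)"
      by (intro mult_le_mono2 card_image_le) simp
    ultimately show ?thesis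
      unfolding distrib_left mult_1_right by linarith
  next
    case False
    then obtain xs c ys where h: "h = xs @ c @ ys" and c: "primitive_closed A T H c"
      and rest: "closed_path A T H (xs @ ys)" and c_end: "H (last c) \<in> H ` set (xs @ ys)"
      using closed_path_split_primitive[OF less.prems(1)] by blast
    define h' where "h' = xs @ ys"
    have "closed_path A T H h'"
      using rest by (simp add: h'_def)
    have count: "count_list h x = count_list c x + count_list h' x" for x
      by (simp add: h h'_def)
    have set_h: "set h = set c \<union> set h'"
      by (auto simp: h h'_def)
    have "length h' < length h"
      using c by (auto simp: h h'_def primitive_closed_def closed_path_def is_path_def)
    moreover note \<open>closed_path A T H h'\<close>
    moreover have "\<nexists>p. delta_double A T H (mdeg h') p"
      using less.prems(2) by (fastforce simp: delta_double_def mdeg_def count)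
    ultimately have IH: "length h' + ?m * card (H ` set h') \<le> ?m * (card (set h') + 1)"
      by (rule less.hyps)
    obtain i where "i < length c" and "count_list h (c ! i) < 2"
      using less.prems(2) c by (auto simp: delta_double_def mdeg_def not_le)
    then have "\<not> set c \<subseteq> set h'"
      using count[of "c ! i"] count_list_0_iff[of c "c ! i"] count_list_0_iff[of h' "c ! i"]
      by (auto dest: nth_mem)
    moreover have "successively (\<lambda>a b. H a = T b) c"
      using c by (simp add: primitive_closed_def closed_path_iff_successively)
    ultimately have gain: "card (H ` set h) + card (set h') < card (H ` set h') + card (set h)"
      using card_heads_add_path_less[OF \<open>closed_path A T H h'\<close>] c_end
      by (simp add: set_h h'_def)
    have "?m * card (H ` set h) + ?m * card (set h') + ?m \<le>
        ?m * card (H ` set h') + ?m * card (set h)"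
      using mult_le_mono2[OF Suc_leI[OF gain], of ?m] by (simp add: algebra_simps)
    moreover have "length h = length c + length h'" and "length c \<le> ?m"
      using primitive_closed_length_le_mQ[OF assms(1) c] by (simp_all add: h h'_def)
    ultimately show ?thesis
      using IH by (simp add: algebra_simps)
  qed
qed

lemma strongly_connected_heads_eq:
  assumes "quiver V A T H" and "strongly_connected V A T H"
  shows "H ` A = V"
proof
  show "H ` A \<subseteq> V" using assms(1) by (auto simp: quiver_def)
  from assms(2) obtain p where p: "closed_path A T H p" and "V \<subseteq> path_verts T H p"
    by (auto simp: strongly_connected_def)
  moreover have "set p \<subseteq> A"
    using p by (simp add: closed_path_def is_path_def)
  ultimately show "V \<subseteq> H ` A"
    by (metis path_verts_closed_path image_mono order_trans)
qed

theorem lemma3p4: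
  fixes V :: "'v set" and A :: "'a set" and tl_of hd_of :: "'a \<Rightarrow> 'v"
    and n d m :: nat and \<delta> :: "'a \<Rightarrow> nat"
  assumes "in_Qndm V A tl_of hd_of n d m"
    and "\<delta> \<in> Omega3 A tl_of hd_of"
  shows "int (delta_abs A \<delta>) \<le> int m * (int d - int n + 1)"
proof -
  have Q: "quiver V A tl_of hd_of" and "strongly_connected V A tl_of hd_of"
    and "card V = n" and "card A = d" and "mQ A tl_of hd_of = m"
    using assms(1) by (auto simp: in_Qndm_def)
  from assms(2) obtain h where h: "closed_path A tl_of hd_of h" "set h = A" "\<delta> = mdeg h"
    and no_double: "\<nexists>p. delta_double A tl_of hd_of (mdeg h) p"
    by (auto simp: Omega3_def Omega0_def)
  have "hd_of ` A = V"
    using Q \<open>strongly_connected V A tl_of hd_of\<close> by (rule strongly_connected_heads_eq)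
  then have "length h + m * n \<le> m * (d + 1)"
    using closed_path_length_bound[OF Q h(1) no_double] h(2) \<open>card V = n\<close> \<open>card A = d\<close>
      \<open>mQ A tl_of hd_of = m\<close> by simp
  moreover have "delta_abs A \<delta> = length h"
    using Q h(2,3) sum_count_set[of h A] by (simp add: delta_abs_def mdeg_def quiver_def)
  ultimately show ?thesis
    by (simp add: algebra_simps flip: of_nat_mult of_nat_add)
qed

end
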